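(* For every $d \ge 14$ with $d \equiv 2 \pmod 4$, the complement of the graph $\mathrm{Cay}\big(\mathrm{Dih}(\tfrac{d+6}{2}),\ \{r^{\pm 2}, s, r^8 s, r^9 s\}\big)$ is a $d$-regular Cayley nut graph of order $d+6$.
   Context: $\mathrm{Dih}(m) = \langle r, s \mid r^m = s^2 = e,\ srs = r^{-1}\rangle$ is the dihedral group of order $2m$. For a finite group $\Gamma$ with identity $e$ and $C \subseteq \Gamma\setminus\{e\}$ closed under inversion, $\mathrm{Cay}(\Gamma, C)$ is the graph with vertex set $\Gamma$ in which $u,v$ are adjacent iff $vu^{-1}\in C$. The complement of a graph $G$ has the same vertex set, with two distinct vertices adjacent iff they are not adjacent in $G$. A nut graph is a graph with at least two vertices whose adjacency matrix has eigenvalue $0$ with multiplicity exactly one, such that the corresponding eigenvector has no zero entries. *)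

theory Defs
  imports Complex_Main "HOL-Algebra.Group"
begin

text \<open>Concrete model of the dihedral group Dih(m) of order 2m: the pair (k, b)
  stands for r^k s^b with 0 <= k < m.  Multiplication follows srs = r^{-1}:
  r^a s^x * r^b s^y = r^(a + (-1)^x b) s^(x+y).\<close>

definition dih_mult :: "nat \<Rightarrow> nat \<times> bool \<Rightarrow> nat \<times> bool \<Rightarrow> nat \<times> bool" where
  "dih_mult m u v =
     (case u of (a, x) \<Rightarrow> case v of (b, y) \<Rightarrow>
        ((if x then a + (m - b) else a + b) mod m, x \<noteq> y))"

definition Dih :: "nat \<Rightarrow> (nat \<times> bool) monoid" where
  "Dih m = \<lparr> carrier = {..<m} \<times> (UNIV :: bool set), mult = dih_mult m, one = (0, False) \<rparr>"

definition dih_r :: "nat \<Rightarrow> nat \<times> bool" where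
  "dih_r m = (1 mod m, False)"

definition dih_s :: "nat \<times> bool" where
  "dih_s = (0, True)"

definition cay_adj :: "('a, 'b) monoid_scheme \<Rightarrow> 'a set \<Rightarrow> 'a \<Rightarrow> 'a \<Rightarrow> bool" where
  "cay_adj G C u v \<longleftrightarrow> v \<otimes>\<^bsub>G\<^esub> inv\<^bsub>G\<^esub> u \<in> C"

definition is_cayley_connection_set :: "('a, 'b) monoid_scheme \<Rightarrow> 'a set \<Rightarrow> bool" where
  "is_cayley_connection_set G C \<longleftrightarrow>
     C \<subseteq> carrier G - {\<one>\<^bsub>G\<^esub>} \<and> (\<forall>c\<in>C. inv\<^bsub>G\<^esub> c \<in> C)"

definition compl_adj :: "'a set \<Rightarrow> ('a \<Rightarrow> 'a \<Rightarrow> bool) \<Rightarrow> 'a \<Rightarrow> 'a \<Rightarrow> bool" where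
  "compl_adj V E u v \<longleftrightarrow> u \<in> V \<and> v \<in> V \<and> u \<noteq> v \<and> \<not> E u v"

definition regular_graph :: "'a set \<Rightarrow> ('a \<Rightarrow> 'a \<Rightarrow> bool) \<Rightarrow> nat \<Rightarrow> bool" where
  "regular_graph V E k \<longleftrightarrow> (\<forall>v\<in>V. card {u\<in>V. E v u} = k)"

definition adj_kernel :: "'a set \<Rightarrow> ('a \<Rightarrow> 'a \<Rightarrow> bool) \<Rightarrow> ('a \<Rightarrow> real) set" where
  "adj_kernel V E = {x. \<forall>v\<in>V. (\<Sum>u\<in>{u\<in>V. E v u}. x u) = 0}"

text \<open>Nut graph: at least two vertices, eigenvalue 0 of the (symmetric) adjacency
  matrix has multiplicity one, i.e. the null space is spanned by one vector x,
  and that eigenvector has no zero entries.\<close>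
definition nut_graph :: "'a set \<Rightarrow> ('a \<Rightarrow> 'a \<Rightarrow> bool) \<Rightarrow> bool" where
  "nut_graph V E \<longleftrightarrow> finite V \<and> card V \<ge> 2 \<and>
     (\<exists>x \<in> adj_kernel V E. (\<forall>v\<in>V. x v \<noteq> 0) \<and>
        (\<forall>y \<in> adj_kernel V E. \<exists>c::real. \<forall>v\<in>V. y v = c * x v))"

end

(*
  The complement H of Cay(Dih(m), C), m = (d + 6)/2, is the Cayley graph on the complementary
  connection set, hence d-regular.  As A(H) = J - I - A(Cay(Dih(m), C)), a real vector y lies in
  the kernel of A(H) iff y v + (SUM c:C. y (c v)) = (SUM u. y u) for every vertex v; the vector that
  is 1 on rotations and -1 on reflections is such a solution.  Conversely, reading y along the
  rotations and, backwards, along the reflections gives two m-periodic integer-indexed sequences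
  solving a 2 x 2 system of linear recurrences.  Eliminating one of them shows that both are
  annihilated by x^2 R(x) (x - 1)^3 acting as a polynomial in the delay operator, where R is an
  explicit palindromic integer polynomial of degree 16.  No root of unity is a root of R: otherwise,
  by Galois conjugation (a Frobenius argument modulo the primes not dividing the order n of the
  root z), R would also vanish at every z^k with k coprime to n, and one such z^k is z^2, -z^2 or
  -z, which integer Bezout certificates rule out.  So x^2 R is coprime to x^m - 1, both sequences
  are constant, and the kernel equations force y to be a multiple of the alternating vector.
*)
theory Submission
  imports Defs "Berlekamp_Zassenhaus.Factor_Bound" "Berlekamp_Zassenhaus.Poly_Mod"
    "HOL-Computational_Algebra.Fundamental_Theorem_Algebra"
begin

section \<open>Galois conjugates of roots of unity\<close>

lemma freshman_dream:
  fixes a b :: "'a :: comm_semiring_1"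
  assumes p: "prime p"
  obtains c where "(a + b) ^ p = a ^ p + b ^ p + of_nat p * c"
proof -
  have p0: "0 < p" using p by (simp add: prime_gt_0_nat)
  have inner: "of_nat (p choose k) * a ^ k * b ^ (p - k)
      = of_nat p * (of_nat ((p choose k) div p) * a ^ k * b ^ (p - k))" if "k \<in> {1..<p}" for k
  proof -
    have "p dvd p choose k" using that p by (intro dvd_choose_prime) auto
    then have "p choose k = p * ((p choose k) div p)" by simp
    then have "of_nat (p choose k) = (of_nat p * of_nat ((p choose k) div p) :: 'a)"
      by (metis of_nat_mult)
    then show ?thesis by (simp add: mult.assoc)
  qed
  have "{..p} = insert p (insert 0 {1..<p})" using p0 by auto
  then have "(a + b) ^ p
      = a ^ p + b ^ p + (\<Sum>k\<in>{1..<p}. of_nat (p choose k) * a ^ k * b ^ (p - k))"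
    using p0 by (simp add: binomial_ring add.assoc)
  also have "\<dots> = a ^ p + b ^ p
      + of_nat p * (\<Sum>k\<in>{1..<p}. of_nat ((p choose k) div p) * a ^ k * b ^ (p - k))"
    by (simp add: inner sum_distrib_left)
  finally show ?thesis by (rule that)
qed

lemma fermat_little_int:
  fixes a :: int
  assumes p: "prime p"
  shows "int p dvd a ^ p - a"
proof (induction a rule: int_induct[where k = 0])
  case base
  show ?case using prime_gt_0_nat[OF p] by (simp add: power_0_left)
next
  case (step1 i)
  obtain c where "(i + 1) ^ p = i ^ p + 1 ^ p + int p * c" using freshman_dream[OF p] .
  then have "(i + 1) ^ p - (i + 1) = (i ^ p - i) + int p * c" by simp
  with step1.IH show ?case by (metis dvd_add dvd_triv_left)
next
  case (step2 i)
  obtain c where "(i - 1 + 1) ^ p = (i - 1) ^ p + 1 ^ p + int p * c" using freshman_dream[OF p] .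
  then have "(i - 1) ^ p - (i - 1) = (i ^ p - i) - int p * c" by simp
  with step2.IH show ?case by (metis dvd_diff dvd_triv_left)
qed

lemma Mp_add_smult_modulus [simp]: "poly_mod.Mp m (f + smult m g) = poly_mod.Mp m f"
  by (metis add.right_neutral poly_mod.Mp_smult_m_0 poly_mod.plus_Mp(2))

lemma frobenius_int_poly:
  fixes H :: "int poly"
  assumes p: "prime p"
  shows "poly_mod.Mp (int p) (H ^ p) = poly_mod.Mp (int p) (H \<circ>\<^sub>p monom 1 p)"
proof (induction H)
  case 0
  show ?case using prime_gt_0_nat[OF p] by (simp add: power_0_left)
next
  case (pCons a G)
  interpret poly_mod "int p" .
  have "pCons a G = [:a:] + monom 1 1 * G"
    by (metis add_pCons pCons_0_as_mult x_as_monom add_0 add_0_right)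
  moreover obtain c
    where "([:a:] + monom 1 1 * G) ^ p = [:a:] ^ p + (monom 1 1 * G) ^ p + of_nat p * c"
    using freshman_dream[OF p] .
  ultimately have fresh: "(pCons a G) ^ p = [:a:] ^ p + (monom 1 1 * G) ^ p + smult (int p) c"
    by (simp add: of_nat_poly)
  obtain t where "a ^ p - a = int p * t" using fermat_little_int[OF p, of a] by (elim dvdE)
  then have const: "[:a:] ^ p = [:a:] + smult (int p) [:t:]" by (simp add: poly_const_pow)
  have "Mp ((monom 1 1 * G) ^ p) = Mp (monom 1 p * G ^ p)"
    by (simp add: power_mult_distrib monom_power)
  also have "\<dots> = Mp (monom 1 p * (G \<circ>\<^sub>p monom 1 p))"
    by (metis mult_Mp(2) pCons.IH)
  finally have "Mp ((pCons a G) ^ p) = Mp ([:a:] + monom 1 p * (G \<circ>\<^sub>p monom 1 p))"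
    unfolding fresh const by (metis Mp_add_smult_modulus add.commute add.left_commute plus_Mp(2))
  then show ?case by (simp add: pcompose_pCons)
qed

lemma x_pow_minus_one_factors_bezout:
  fixes F G :: "'a :: idom poly"
  assumes fac: "F * G = monom 1 n - 1" and n: "n > 0"
  shows "F * (smult (of_nat n) G - monom 1 1 * pderiv G) + G * (- monom 1 1 * pderiv F)
    = [:- of_nat n:]"
proof -
  have "F * (smult (of_nat n) G - monom 1 1 * pderiv G) + G * (- monom 1 1 * pderiv F)
      = smult (of_nat n) (F * G) - monom 1 1 * pderiv (F * G)"
    by (simp add: pderiv_mult algebra_simps)
  also have "\<dots> = [:- of_nat n:]"
    using n by (simp add: fac pderiv_diff pderiv_monom mult_monom smult_diff_right smult_monom)
  finally show ?thesis .
qed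

(* Modulo p, F divides H^p = H(x^p); but H V = -n modulo F by the cofactor identity, so F divides
   the constant (-n)^p modulo p. *)
lemma frobenius_factor_x_pow_minus_one:
  fixes F G H :: "int poly"
  assumes fac: "F * G = monom 1 n - 1" and n: "n > 0" and HG: "H dvd G"
    and F: "monic F" "degree F > 0" and p: "prime p" and FH: "F dvd H \<circ>\<^sub>p monom 1 p"
  shows "p dvd n"
proof -
  interpret poly_mod "int p" .
  obtain K where K: "G = H * K" using HG by (elim dvdE)
  obtain W where W: "H \<circ>\<^sub>p monom 1 p = F * W" using FH by (elim dvdE)
  define U where "U = smult (of_nat n) G - monom 1 1 * pderiv G"
  define V where "V = - monom 1 1 * pderiv F"
  have "F * U + G * V = [:- int n:]"
    unfolding U_def V_def by (rule x_pow_minus_one_factors_bezout[OF fac n])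
  then have "[:- int n:] - H * (K * V) = F * U" by (simp add: K mult.assoc eq_diff_eq)
  then have "F dvd [:- int n:] - H * (K * V)" by simp
  moreover have "[:- int n:] - H * (K * V) dvd [:- int n:] ^ p - (H * (K * V)) ^ p"
    unfolding power_diff_sumr2 by simp
  ultimately obtain Z where Z: "[:- int n:] ^ p - (H * (K * V)) ^ p = F * Z"
    by (metis dvd_trans dvdE)
  have "Mp ((H * (K * V)) ^ p) = Mp (Mp (H ^ p) * (K * V) ^ p)"
    by (simp add: power_mult_distrib)
  also have "\<dots> = Mp (F * (W * (K * V) ^ p))"
    using frobenius_int_poly[OF p, of H] by (simp add: W mult.assoc)
  finally have "Mp [:(- int n) ^ p:] = Mp (F * (Z + W * (K * V) ^ p))"
    using Z by (metis (no_types, lifting) add_diff_cancel_left' diff_add_cancel distrib_left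
        plus_Mp(2) poly_const_pow)
  then have "F dvdm [:(- int n) ^ p:]" unfolding dvdm_def by blast
  then have "int p dvd (- int n) ^ p"
    using monic_dvdm_constant F by (simp add: mod_eq_0_iff_dvd)
  moreover have "prime (int p)" using p by simp
  ultimately have "int p dvd int n"
    using prime_dvd_power_iff[of "int p" p] prime_gt_0_nat[OF p] by simp
  then show ?thesis by simp
qed

interpretation of_rat_poly_hom: map_poly_idom_hom of_rat ..

definition min_poly_rat :: "rat poly \<Rightarrow> 'a :: field_char_0 \<Rightarrow> bool" where
  "min_poly_rat f z \<longleftrightarrow> monic f \<and> poly (map_poly of_rat f) z = 0 \<and>
     (\<forall>q. poly (map_poly of_rat q) z = 0 \<longrightarrow> f dvd q)"

lemma min_poly_rat_exists:
  assumes "q \<noteq> 0" and "poly (map_poly of_rat q) z = 0"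
  obtains f where "min_poly_rat f z"
proof -
  obtain g where g: "g \<noteq> 0" "poly (map_poly of_rat g) z = 0"
    and g_min: "\<And>q. q \<noteq> 0 \<Longrightarrow> poly (map_poly of_rat q) z = 0 \<Longrightarrow>
      degree g \<le> degree q"
    using ex_has_least_nat[of "\<lambda>q. q \<noteq> 0 \<and> poly (map_poly of_rat q) z = 0" q degree]
      assms by blast
  define f where "f = smult (inverse (lead_coeff g)) g"
  have f: "monic f" "poly (map_poly of_rat f) z = 0" "degree f = degree g"
    using g by (simp_all add: f_def hom_distribs)
  have f_dvd: "f dvd q" if q: "poly (map_poly of_rat q) z = 0" for q
  proof (rule ccontr)
    assume "\<not> f dvd q"
    then have r: "q mod f \<noteq> 0" by (simp add: dvd_eq_mod_eq_0)
    have "poly (map_poly of_rat (q div f * f + q mod f)) z = 0" using q by simp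
    then have "poly (map_poly of_rat (q mod f)) z = 0"
      using f(2) by (simp only: of_rat_poly_hom.hom_add of_rat_poly_hom.hom_mult
          poly_add poly_mult) simp
    then have "degree g \<le> degree (q mod f)" using g_min r by blast
    moreover have "degree (q mod f) < degree f"
      using degree_mod_less' r f(1) by (metis leading_coeff_0_iff zero_neq_one)
    ultimately show False using f(3) by simp
  qed
  have "min_poly_rat f z" unfolding min_poly_rat_def using f(1,2) f_dvd by blast
  then show ?thesis by (rule that)
qed

lemma min_poly_rat_dvd_nonunit:
  assumes f: "min_poly_rat f z" and d: "d dvd f" "\<not> is_unit d"
  shows "f dvd d"
proof -
  obtain k where k: "f = d * k" using d(1) by (elim dvdE)
  have "f \<noteq> 0" using f by (auto simp: min_poly_rat_def)
  then have "d \<noteq> 0" "k \<noteq> 0" using k by auto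
  then have "degree f = degree d + degree k" "degree d > 0"
    using k d(2) by (simp_all add: degree_mult_eq is_unit_iff_degree)
  then have "\<not> f dvd k" using \<open>k \<noteq> 0\<close> by (auto dest: dvd_imp_degree_le)
  then have "poly (map_poly of_rat k) z \<noteq> 0" using f by (auto simp: min_poly_rat_def)
  moreover have "poly (map_poly of_rat f) z = 0" using f by (simp add: min_poly_rat_def)
  then have "poly (map_poly of_rat d) z * poly (map_poly of_rat k) z = 0"
    by (simp add: k hom_distribs)
  ultimately have "poly (map_poly of_rat d) z = 0" by simp
  then show ?thesis using f by (simp add: min_poly_rat_def)
qed

(* The factorisation library hides Rings.coprime behind a constant of its own. *)
lemma min_poly_rat_eq_or_coprime:
  assumes f: "min_poly_rat f z" and h: "min_poly_rat h w"
  shows "f = h \<or> Rings.coprime f h"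
proof (cases "is_unit (gcd f h)")
  case True
  then show ?thesis by (metis is_unit_gcd)
next
  case False
  have "f dvd h"
    using min_poly_rat_dvd_nonunit[OF f gcd_dvd1 False] by (meson dvd_trans gcd_dvd2)
  moreover have "h dvd f"
    using min_poly_rat_dvd_nonunit[OF h gcd_dvd2 False] by (meson dvd_trans gcd_dvd1)
  moreover have "normalize f = f" "normalize h = h"
    using f h by (simp_all add: min_poly_rat_def normalize_monic)
  ultimately show ?thesis by (metis associated_eqI)
qed

lemma monic_int_poly_rat_factors:
  fixes P :: "int poly" and g k :: "rat poly"
  assumes P: "monic P" and fac: "of_int_poly P = g * k" and g: "monic g"
  obtains G K where "g = of_int_poly G" "k = of_int_poly K" "monic G" "P = G * K"
proof -
  have "content P dvd 1" using content_dvd_coeff[of P "degree P"] P by simp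
  then have content: "content P = 1" using content_ge_0_int[of P] by (simp add: zdvd1_eq)
  obtain r G where G: "rat_to_normalized_int_poly g = (r, G)" by force
  obtain s K where K: "rat_to_normalized_int_poly k = (s, K)" by force
  have "P \<noteq> 0" using P by (metis leading_coeff_0_iff zero_neq_one)
  then have PGK: "P = G * K" using rat_to_int_factor_content_1[OF content fac G K] by blast
  note G' = rat_to_normalized_int_poly[OF G] and K' = rat_to_normalized_int_poly[OF K]
  have k: "monic k"
    using fac g P by (metis lead_coeff_mult mult_1 of_int_hom.hom_lead_coeff of_int_hom.hom_one)
  have r: "r * of_int (lead_coeff G) = 1"
    using G'(1) g by (metis lead_coeff_smult of_int_hom.hom_lead_coeff)
  have s: "s * of_int (lead_coeff K) = 1"
    using K'(1) k by (metis lead_coeff_smult of_int_hom.hom_lead_coeff)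
  have "lead_coeff G * lead_coeff K = 1" using PGK P by (simp add: lead_coeff_mult)
  then have "lead_coeff G = 1 \<or> lead_coeff G = -1" by (metis zmult_eq_1_iff)
  then have "lead_coeff G = 1" using r G'(2) by auto
  then have "r = 1" "s = 1" using r s \<open>lead_coeff G * lead_coeff K = 1\<close> by simp_all
  then show ?thesis using that G'(1) K'(1) PGK \<open>lead_coeff G = 1\<close> by simp
qed

lemma map_poly_of_rat_of_int_poly [simp]: "map_poly of_rat (of_int_poly F) = of_int_poly F"
  by (simp add: map_poly_map_poly o_def)

lemma monic_monom_minus_one:
  assumes "n > 0"
  shows "monic (monom 1 n - 1 :: 'a :: comm_ring_1 poly)"
proof -
  have "- (1 :: 'a poly) = [:-1:]" by (metis minus_pCons minus_zero pCons_one)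
  then have eq: "monom 1 n - 1 = monom (1 :: 'a) n + [:-1:]" by simp
  have "degree (monom (1 :: 'a) n + [:-1:]) = n"
    using assms by (simp add: degree_add_eq_left degree_monom_eq)
  then show ?thesis
    unfolding eq using assms by (simp add: coeff_monom coeff_pCons split: nat.split)
qed

lemma coprime_min_poly_rat_int_factors:
  fixes z w :: complex
  assumes f: "min_poly_rat f z" and h: "min_poly_rat h w" and "Rings.coprime f h"
    and z: "z ^ n = 1" and w: "w ^ n = 1" and n: "n > 0"
  obtains F G H where "f = of_int_poly F" "monic F" "h = of_int_poly H" "monic H"
    "F * G = monom 1 n - 1" "H dvd G"
proof -
  define X :: "int poly" where "X = monom 1 n - 1"
  have X: "monic X" unfolding X_def using n by (rule monic_monom_minus_one)
  have "poly (of_int_poly X) u = 0" if "u ^ n = 1" for u :: complex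
    using that by (simp add: X_def map_poly_monom hom_distribs poly_monom)
  then have "f dvd of_int_poly X" "h dvd of_int_poly X"
    using f h z w by (auto simp: min_poly_rat_def)
  then have "f * h dvd of_int_poly X" using \<open>Rings.coprime f h\<close> by (simp add: divides_mult)
  then obtain q where q: "of_int_poly X = f * (h * q)" by (metis dvdE mult.assoc)
  have "monic f" "monic h" using f h by (simp_all add: min_poly_rat_def)
  obtain F G where F: "f = of_int_poly F" "monic F" and G: "h * q = of_int_poly G" "X = F * G"
    using monic_int_poly_rat_factors[OF X q \<open>monic f\<close>] by blast
  have "monic G" using X F(2) G(2) by (simp add: lead_coeff_mult)
  then obtain H Q where H: "h = of_int_poly H" "monic H" and "G = H * Q"
    using monic_int_poly_rat_factors[OF _ G(1)[symmetric] \<open>monic h\<close>] by blast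
  then have "H dvd G" by simp
  moreover have "F * G = monom 1 n - 1" using G(2) by (simp add: X_def)
  ultimately show ?thesis using that F H by blast
qed

lemma min_poly_rat_root_of_unity_pow_prime:
  fixes z :: complex
  assumes f: "min_poly_rat f z" and h: "min_poly_rat h (z ^ p)"
    and z: "z ^ n = 1" and n: "n > 0" and p: "prime p" "\<not> p dvd n"
  shows "f = h"
proof (rule ccontr)
  assume "f \<noteq> h"
  then have "Rings.coprime f h" using min_poly_rat_eq_or_coprime[OF f h] by blast
  moreover have "(z ^ p) ^ n = 1" using z by (metis mult.commute power_mult power_one)
  ultimately obtain F G H
    where F: "f = of_int_poly F" "monic F" and H: "h = of_int_poly H" "monic H"
      and FG: "F * G = monom 1 n - 1" and "H dvd G"
    using coprime_min_poly_rat_int_factors[OF f h _ z _ n] by blast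
  have f': "monic f" "poly (map_poly of_rat f) z = 0"
    "\<And>q. poly (map_poly of_rat q) z = 0 \<Longrightarrow> f dvd q"
    using f by (simp_all add: min_poly_rat_def)
  have "poly (map_poly of_rat (h \<circ>\<^sub>p monom 1 p)) z = 0"
    using h by (simp add: min_poly_rat_def of_rat_hom.map_poly_pcompose poly_pcompose
        map_poly_monom poly_monom)
  moreover have "h \<circ>\<^sub>p monom 1 p = of_int_poly (H \<circ>\<^sub>p monom 1 p)"
    by (simp add: H(1) of_int_hom.map_poly_pcompose map_poly_monom)
  ultimately obtain w where w: "of_int_poly (H \<circ>\<^sub>p monom 1 p) = f * w"
    using f'(3) by (metis dvdE)
  have "monic (H \<circ>\<^sub>p monom 1 p)"
    using H(2) prime_gt_0_nat[OF p(1)] by (subst lead_coeff_comp) (simp_all add: degree_monom_eq)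
  then obtain F' W where "f = of_int_poly F'" "H \<circ>\<^sub>p monom 1 p = F' * W"
    using monic_int_poly_rat_factors[OF _ w f'(1)] by blast
  then have "F dvd H \<circ>\<^sub>p monom 1 p" using F(1) by (simp add: of_int_poly_hom.eq_iff)
  moreover have "degree F > 0"
  proof (rule ccontr)
    assume "\<not> degree F > 0"
    then have "F = 1" using F(2) monic_degree_0 by blast
    then show False using f'(2) F(1) by simp
  qed
  ultimately have "p dvd n"
    using frobenius_factor_x_pow_minus_one[OF FG n \<open>H dvd G\<close> F(2) _ p(1)] by blast
  then show False using p(2) by contradiction
qed

lemma int_poly_root_of_unity_pow_prime:
  fixes F :: "int poly" and z :: complex
  assumes F: "poly (of_int_poly F) z = 0" and z: "z ^ n = 1" and n: "n > 0"
    and p: "prime p" "\<not> p dvd n"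
  shows "poly (of_int_poly F) (z ^ p) = 0"
proof -
  define X :: "rat poly" where "X = monom 1 n - 1"
  have "X \<noteq> 0"
    unfolding X_def using monic_monom_minus_one[OF n] by (metis leading_coeff_0_iff zero_neq_one)
  have "(z ^ p) ^ n = 1" using z by (metis mult.commute power_mult power_one)
  then have "poly (map_poly of_rat X) w = 0" if "w = z \<or> w = z ^ p" for w
    using that z by (auto simp: X_def map_poly_monom hom_distribs poly_monom)
  then obtain f h where f: "min_poly_rat f z" and h: "min_poly_rat h (z ^ p)"
    using min_poly_rat_exists[OF \<open>X \<noteq> 0\<close>] by metis
  have "f dvd of_int_poly F" using f F by (simp add: min_poly_rat_def)
  then have "h dvd of_int_poly F" using min_poly_rat_root_of_unity_pow_prime[OF f h z n p] by simp
  then obtain k where "of_int_poly F = h * k" by (elim dvdE)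
  then have "poly (map_poly of_rat (of_int_poly F)) (z ^ p) = 0"
    using h by (simp add: min_poly_rat_def hom_distribs)
  then show ?thesis by simp
qed

lemma int_poly_root_of_unity_pow_coprime:
  fixes F :: "int poly" and z :: complex
  assumes F: "poly (of_int_poly F) z = 0" and z: "z ^ n = 1" and n: "n > 0"
  shows "Rings.coprime k n \<Longrightarrow> poly (of_int_poly F) (z ^ k) = 0"
proof (induction k rule: prime_divisors_induct)
  case zero
  then have "z = 1" using z by simp
  then show ?case using F by simp
next
  case (unit k)
  then show ?case using F by simp
next
  case (factor p k)
  then have "poly (of_int_poly F) (z ^ k) = 0" and "\<not> p dvd n"
    using prime_imp_coprime_nat[of p n] by (auto simp: prime_nat_iff)
  moreover have "(z ^ k) ^ n = 1" using z by (metis mult.commute power_mult power_one)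
  ultimately show ?case
    using int_poly_root_of_unity_pow_prime[of F "z ^ k" n p] n factor(1)
    by (simp add: power_mult mult.commute)
qed

section \<open>A polynomial without roots of unity\<close>

(* Apart from the factor x^2 (x - 1)^2, the determinant of the recurrences satisfied by kernel
   vectors, see kernel_system_det. *)
definition kernel_poly :: "int poly" where
  "kernel_poly = [:1, 3, 5, 7, 9, 10, 11, 10, 10, 10, 11, 10, 9, 7, 5, 3, 1:]"

lemma kernel_poly_factorisation:
  "[:-1, 1:] * [:-1, 1:] * kernel_poly
    = [:1, 0, 0, 0, 0, 0, 0, 0, 1, 1:] * [:1, 1, 0, 0, 0, 0, 0, 0, 0, 1:]
      - [:0, 0, 0, 0, 0, 1:] * [:1, 0, 1, 0, 1:] * [:1, 0, 1, 0, 1:]"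
  unfolding kernel_poly_def by code_simp

lemma kernel_poly_bezout_sq:
  "[:-98, -268, -128, -403, -297, -574, -349, -750, -579, -738, -492, -1051, -643, -735, -528,
    -1015, -414, -733, -656, -1010, -494, -863, -569, -771, -487, -636, -328, -441, -294, -277,
    -142, -137:]
     * kernel_poly
   + [:220, 562, 762, 1127, 1518, 1577, 1383, 1281, 1310, 1502, 1538, 1319, 1135, 977, 553, 137:]
     * (kernel_poly \<circ>\<^sub>p [:0, 0, 1:]) = [:122:]"
proof -
  have comp: "kernel_poly \<circ>\<^sub>p [:0, 0, 1:] =
    [:1, 0, 3, 0, 5, 0, 7, 0, 9, 0, 10, 0, 11, 0, 10, 0, 10, 0, 10, 0, 11, 0, 10, 0, 9, 0, 7, 0, 5,
    0, 3, 0, 1:]"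
    by (subst poly_eq_poly_eq_iff[symmetric])
      (simp add: fun_eq_iff kernel_poly_def poly_pcompose algebra_simps)
  show ?thesis unfolding comp unfolding kernel_poly_def by code_simp
qed

lemma kernel_poly_bezout_neg_sq:
  "[:686806, -625053, -1169383, 526907, 2366024, -180850, -5039998, 2134579, 4490249, -443727,
    -6988439, 2233692, 5934617, -1180874, -7018673, 3101969, 5008881, -1226458, -7059038,
    3077587, 5938504, -1956853, -6501645, 2724649, 5139328, -2233511, -3601574, 1143851,
    2931015, -1164404, -1473076, 906928:]
     * kernel_poly
   + [:230872, -1435365, 303128, -3007230, -150689, -4453524, -1067413, -4085290, -1150395,
    -3292771, -2399411, -2446432, -2164043, -1671792, -1247708, -906928:]
     * (kernel_poly \<circ>\<^sub>p [:0, 0, -1:]) = [:917678:]"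
proof -
  have comp: "kernel_poly \<circ>\<^sub>p [:0, 0, -1:] =
    [:1, 0, -3, 0, 5, 0, -7, 0, 9, 0, -10, 0, 11, 0, -10, 0, 10, 0, -10, 0, 11, 0, -10, 0, 9, 0, -7,
    0, 5, 0, -3, 0, 1:]"
    by (subst poly_eq_poly_eq_iff[symmetric])
      (simp add: fun_eq_iff kernel_poly_def poly_pcompose algebra_simps)
  show ?thesis unfolding comp unfolding kernel_poly_def by code_simp
qed

lemma kernel_poly_bezout_neg:
  "[:38, -41, -67, 165, -215, 237, -196, 196, -215, 236, -234, 279, -253, 199, -129, 43:]
     * kernel_poly
   + [:38, 41, -67, -165, -215, -237, -196, -196, -215, -236, -234, -279, -253, -199, -129, -43:]
     * (kernel_poly \<circ>\<^sub>p [:0, -1:]) = [:76:]"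
proof -
  have comp: "kernel_poly \<circ>\<^sub>p [:0, -1:] =
    [:1, -3, 5, -7, 9, -10, 11, -10, 10, -10, 11, -10, 9, -7, 5, -3, 1:]"
    by (subst poly_eq_poly_eq_iff[symmetric])
      (simp add: fun_eq_iff kernel_poly_def poly_pcompose algebra_simps)
  show ?thesis unfolding comp unfolding kernel_poly_def by code_simp
qed

lemma bezout_const_no_common_root:
  fixes A B U V :: "int poly" and z :: "'a :: {comm_ring_1, ring_char_0}"
  assumes "U * A + V * B = [:c:]" and "c \<noteq> 0" and "poly (of_int_poly A) z = 0"
  shows "poly (of_int_poly B) z \<noteq> 0"
proof
  assume "poly (of_int_poly B) z = 0"
  moreover have "poly (of_int_poly (U * A + V * B)) z = of_int c"
    using assms(1) by (simp add: of_int_hom.map_poly_pCons_hom)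
  ultimately show False using assms(2,3) by (simp add: hom_distribs)
qed

lemma root_of_unity_conj_cases:
  fixes z :: "'a :: idom"
  assumes z: "z ^ n = 1" and n: "n > 0"
    and order: "\<And>j. 0 < j \<Longrightarrow> j < n \<Longrightarrow> z ^ j \<noteq> 1"
  obtains k where "Rings.coprime k n" "z ^ k = z ^ 2 \<or> z ^ k = - (z ^ 2) \<or> z ^ k = - z"
proof (cases "even n")
  case False
  then show ?thesis using that[of 2] by simp
next
  case True
  then obtain h where h: "n = 2 * h" by (elim evenE)
  then have "h > 0" "h < n" using n by simp_all
  then have "z ^ h \<noteq> 1" using order by blast
  moreover have "(z ^ h) ^ 2 = 1" using z h by (simp add: power_mult[symmetric] mult.commute)
  ultimately have zh: "z ^ h = -1" by (simp add: power2_eq_1_iff)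
  show ?thesis
  proof (cases "even h")
    case True
    then have "Rings.coprime (h + 1) n" by (simp add: h)
    moreover have "z ^ (h + 1) = - z" using zh by simp
    ultimately show ?thesis using that[of "h + 1"] by blast
  next
    case False
    have "Rings.coprime 2 h" using False by simp
    moreover have "gcd (h + 2) h = gcd 2 h" by (metis add.commute gcd_add1)
    ultimately have "Rings.coprime (h + 2) h" by (simp only: coprime_iff_gcd_eq_1)
    then have "Rings.coprime (h + 2) n" using False by (simp add: h)
    moreover have "z ^ (h + 2) = - (z ^ 2)" using zh by (simp add: power_add power2_eq_square)
    ultimately show ?thesis using that[of "h + 2"] by blast
  qed
qed

lemma kernel_poly_no_root_of_unity:
  fixes z :: complex
  assumes z: "z ^ m = 1" and m: "m > 0"
  shows "poly (of_int_poly kernel_poly) z \<noteq> 0"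
proof
  assume root: "poly (of_int_poly kernel_poly) z = 0"
  define n where "n = (LEAST n. 0 < n \<and> z ^ n = 1)"
  have n: "0 < n" "z ^ n = 1"
    using LeastI[of "\<lambda>n. 0 < n \<and> z ^ n = 1" m] z m by (simp_all add: n_def)
  have "z ^ j \<noteq> 1" if "0 < j" "j < n" for j
    using not_less_Least[of j "\<lambda>n. 0 < n \<and> z ^ n = 1"] that by (auto simp: n_def)
  then obtain k where k: "Rings.coprime k n" "z ^ k = z ^ 2 \<or> z ^ k = - (z ^ 2) \<or> z ^ k = - z"
    using root_of_unity_conj_cases[OF n(2,1)] by blast
  have "poly (of_int_poly kernel_poly) (z ^ k) = 0"
    using int_poly_root_of_unity_pow_coprime[OF root n(2,1) k(1)] .
  then have "poly (of_int_poly (kernel_poly \<circ>\<^sub>p [:0, 0, 1:])) z = 0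
      \<or> poly (of_int_poly (kernel_poly \<circ>\<^sub>p [:0, 0, -1:])) z = 0
      \<or> poly (of_int_poly (kernel_poly \<circ>\<^sub>p [:0, -1:])) z = 0"
    using k(2) by (auto simp: of_int_hom.map_poly_pcompose poly_pcompose power2_eq_square)
  then show False
    using bezout_const_no_common_root[OF kernel_poly_bezout_sq _ root]
      bezout_const_no_common_root[OF kernel_poly_bezout_neg_sq _ root]
      bezout_const_no_common_root[OF kernel_poly_bezout_neg _ root]
    by auto
qed

section \<open>Polynomials acting on sequences\<close>

definition shift_act :: "'a :: comm_ring_1 poly \<Rightarrow> (int \<Rightarrow> 'a) \<Rightarrow> int \<Rightarrow> 'a" where
  "shift_act P a k = (\<Sum>i\<le>degree P. coeff P i * a (k - int i))"

lemma shift_act_conv_sum: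
  assumes "degree P \<le> N"
  shows "shift_act P a k = (\<Sum>i\<le>N. coeff P i * a (k - int i))"
  unfolding shift_act_def
  by (rule sum.mono_neutral_left) (use assms in \<open>auto simp: coeff_eq_0\<close>)

lemma shift_act_0 [simp]: "shift_act 0 a k = 0"
  by (simp add: shift_act_def)

lemma shift_act_1 [simp]: "shift_act 1 a k = a k"
  by (simp add: shift_act_def)

lemma shift_act_pCons [simp]: "shift_act (pCons c P) a k = c * a k + shift_act P a (k - 1)"
proof -
  have "shift_act (pCons c P) a k
      = (\<Sum>i\<le>Suc (degree P). coeff (pCons c P) i * a (k - int i))"
    by (rule shift_act_conv_sum) (simp add: degree_pCons_le)
  also have "\<dots> = c * a k + (\<Sum>i\<le>degree P. coeff P i * a (k - 1 - int i))"
    by (subst sum.atMost_Suc_shift) (simp add: algebra_simps)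
  finally show ?thesis by (simp add: shift_act_def)
qed

lemma shift_act_add: "shift_act (P + Q) a k = shift_act P a k + shift_act Q a k"
proof -
  let ?N = "max (degree P) (degree Q)"
  have "shift_act (P + Q) a k = (\<Sum>i\<le>?N. coeff (P + Q) i * a (k - int i))"
    by (rule shift_act_conv_sum) (rule degree_add_le_max)
  also have "\<dots>
      = (\<Sum>i\<le>?N. coeff P i * a (k - int i)) + (\<Sum>i\<le>?N. coeff Q i * a (k - int i))"
    by (simp add: algebra_simps sum.distrib)
  also have "\<dots> = shift_act P a k + shift_act Q a k"
    using shift_act_conv_sum[of P ?N a k] shift_act_conv_sum[of Q ?N a k] by simp
  finally show ?thesis .
qed

lemma shift_act_uminus: "shift_act (- P) a k = - shift_act P a k"
  by (simp add: shift_act_def sum_negf)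

lemma shift_act_diff: "shift_act (P - Q) a k = shift_act P a k - shift_act Q a k"
  using shift_act_add[of P "- Q"] by (simp add: shift_act_uminus)

lemma shift_act_smult: "shift_act (smult c P) a k = c * shift_act P a k"
proof -
  have "shift_act (smult c P) a k = (\<Sum>i\<le>degree P. coeff (smult c P) i * a (k - int i))"
    by (rule shift_act_conv_sum) (rule degree_smult_le)
  then show ?thesis by (simp add: shift_act_def sum_distrib_left mult.assoc)
qed

lemma shift_act_mult: "shift_act (P * Q) a = shift_act P (shift_act Q a)"
proof
  show "shift_act (P * Q) a k = shift_act P (shift_act Q a) k" for k
  proof (induction P arbitrary: k)
    case (pCons c P)
    have "pCons c P * Q = smult c Q + pCons 0 (P * Q)" by simp
    then show ?case using pCons.IH by (simp add: shift_act_add shift_act_smult)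
  qed simp
qed

lemma shift_act_diff_seq: "shift_act P (\<lambda>k. a k - b k) k = shift_act P a k - shift_act P b k"
  by (simp add: shift_act_def algebra_simps sum_subtractf)

lemma shift_act_const: "shift_act P (\<lambda>_. c) k = poly P 1 * c"
  by (simp add: shift_act_def poly_altdef sum_distrib_right)

lemma shift_act_periodic:
  assumes "\<And>k. a (k + int m) = a k"
  shows "shift_act P a (k + int m) = shift_act P a k"
  using assms[of "k - int _"] by (simp add: shift_act_def algebra_simps)

lemma shift_invariant_imp_const:
  fixes a :: "int \<Rightarrow> 'a"
  assumes "\<And>k. a (k - 1) = a k"
  shows "a k = a 0"
proof (induction k rule: int_induct[where k = 0])
  case (step1 i)
  then show ?case using assms[of "i + 1"] by simp
next
  case (step2 i)
  then show ?case using assms[of i] by simp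
qed simp

lemma periodic_const_diff_eq_0:
  fixes a :: "int \<Rightarrow> 'a :: {idom, ring_char_0}"
  assumes diff: "\<And>k. a (k - 1) - a k = c" and per: "\<And>k. a (k + int m) = a k" and m: "m > 0"
  shows "c = 0"
proof -
  have "a 0 = a (int n) + of_nat n * c" for n
  proof (induction n)
    case (Suc n)
    then show ?case using diff[of "int (Suc n)"] by (simp add: algebra_simps)
  qed simp
  from this[of m] per[of 0] have "of_nat m * c = 0" by simp
  then show ?thesis using m by simp
qed

lemma periodic_const_of_diff_power:
  fixes a :: "int \<Rightarrow> 'a :: {idom, ring_char_0}"
  assumes m: "m > 0" and per: "\<And>k. a (k + int m) = a k"
    and ann: "\<And>k. shift_act ([:-1, 1:] ^ j) a k = 0"
  shows "a k = a 0"
  using per ann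
proof (induction j arbitrary: a k)
  case 0
  then show ?case by simp
next
  case (Suc j)
  define g where "g = shift_act [:-1, 1:] a"
  have "g k = g 0" for k
  proof (rule Suc.IH)
    show "g (k + int m) = g k" for k
      unfolding g_def using Suc.prems(1) by (rule shift_act_periodic)
    show "shift_act ([:-1, 1:] ^ j) g k = 0" for k
      using Suc.prems(2)[of k] by (simp only: g_def power_Suc2 shift_act_mult)
  qed
  then have "a (k - 1) - a k = g 0" for k by (simp add: g_def)
  moreover from this have "g 0 = 0" using periodic_const_diff_eq_0 Suc.prems(1) m by blast
  ultimately show ?case by (intro shift_invariant_imp_const) simp
qed

interpretation of_real_poly_hom: map_poly_idom_hom of_real ..

lemma shift_act_monom_1: "shift_act (monom 1 m) a k = a (k - int m)"
proof (induction m arbitrary: k)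
  case 0
  then show ?case by (simp add: monom_0 one_pCons[symmetric])
next
  case (Suc m)
  then show ?case by (simp add: monom_Suc algebra_simps)
qed

lemma periodic_annihilated_by_coprime:
  fixes a :: "int \<Rightarrow> 'a :: field_gcd"
  assumes per: "\<And>k. a (k + int m) = a k" and cop: "Rings.coprime P (monom 1 m - 1)"
    and ann: "\<And>k. shift_act P a k = 0"
  shows "a k = 0"
proof -
  obtain U V where UV: "U * P + V * (monom 1 m - 1) = 1"
    using bezout_coefficients_fst_snd[of P "monom 1 m - 1"] cop by (metis coprime_iff_gcd_eq_1)
  have "shift_act P a = (\<lambda>_. 0)" using ann by (simp add: fun_eq_iff)
  moreover have "shift_act (monom 1 m - 1) a = (\<lambda>_. 0)"
    using per[of "_ - int m"] by (simp add: fun_eq_iff shift_act_diff shift_act_monom_1)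
  ultimately have "shift_act (U * P + V * (monom 1 m - 1)) a k = 0"
    by (simp add: shift_act_add shift_act_mult shift_act_const)
  then show ?thesis by (simp add: UV)
qed

lemma periodic_const_of_annihilator:
  fixes a :: "int \<Rightarrow> 'a :: {field_gcd, ring_char_0}"
  assumes m: "m > 0" and per: "\<And>k. a (k + int m) = a k"
    and cop: "Rings.coprime P (monom 1 m - 1)"
    and ann: "\<And>k. shift_act (P * [:-1, 1:] ^ j) a k = 0"
  shows "a k = a 0"
proof (rule periodic_const_of_diff_power[where a = a, OF m per])
  show "shift_act ([:-1, 1:] ^ j) a k = 0" for k
  proof (rule periodic_annihilated_by_coprime[OF _ cop])
    show "shift_act ([:-1, 1:] ^ j) a (k + int m) = shift_act ([:-1, 1:] ^ j) a k" for k
      using per by (rule shift_act_periodic)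
    show "shift_act P (shift_act ([:-1, 1:] ^ j) a) k = 0" for k
      using ann by (simp add: shift_act_mult)
  qed
qed

lemma shift_act_cramer:
  assumes eq1: "\<And>k. shift_act A a k + shift_act B b k = c"
    and eq2: "\<And>k. shift_act C a k + shift_act D b k = d"
  shows "shift_act ([:-1, 1:] * (A * D - B * C)) a k = 0"
proof -
  have A: "shift_act A a = (\<lambda>k. c - shift_act B b k)"
    and C: "shift_act C a = (\<lambda>k. d - shift_act D b k)"
    using eq1 eq2 by (simp_all add: fun_eq_iff algebra_simps)
  have BD: "shift_act D (shift_act B b) = shift_act B (shift_act D b)"
    by (metis mult.commute shift_act_mult)
  have "shift_act (A * D - B * C) a k
      = shift_act D (shift_act A a) k - shift_act B (shift_act C a) k" for k
    by (simp add: shift_act_diff shift_act_mult mult.commute[of A D])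
  also have "\<dots> k = poly D 1 * c - poly B 1 * d" for k
    unfolding A C by (simp add: shift_act_diff_seq shift_act_const BD)
  finally have "shift_act (A * D - B * C) a = (\<lambda>_. poly D 1 * c - poly B 1 * d)" by auto
  then show ?thesis unfolding shift_act_mult by (simp add: shift_act_const)
qed

lemma periodic_shift_system_const:
  fixes a b :: "int \<Rightarrow> 'a :: {field_gcd, ring_char_0}"
  assumes m: "m > 0" and per: "\<And>k. a (k + int m) = a k"
    and eq1: "\<And>k. shift_act A a k + shift_act B b k = c"
    and eq2: "\<And>k. shift_act C a k + shift_act D b k = d"
    and det: "A * D - B * C = M * [:-1, 1:] ^ j" and cop: "Rings.coprime M (monom 1 m - 1)"
  shows "a k = a 0"
proof (rule periodic_const_of_annihilator[where a = a, OF m per cop])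
  have "[:-1, 1:] * (A * D - B * C) = M * [:-1, 1:] ^ Suc j"
    by (simp only: det power_Suc mult.left_commute)
  then show "shift_act (M * [:-1, 1:] ^ Suc j) a k = 0" for k
    using shift_act_cramer[OF eq1 eq2, of k] by simp
qed

lemma coprime_of_no_common_complex_root:
  fixes P Q :: "real poly"
  assumes "\<And>z :: complex.
    poly (map_poly of_real P) z = 0 \<Longrightarrow> poly (map_poly of_real Q) z \<noteq> 0"
  shows "Rings.coprime P Q"
proof (rule ccontr)
  assume "\<not> Rings.coprime P Q"
  then have "degree (gcd P Q) \<noteq> 0"
    by (metis assms gcd_eq_0_iff is_unit_gcd is_unit_iff_degree map_poly_0 poly_0)
  then obtain z :: complex where z: "poly (map_poly of_real (gcd P Q)) z = 0"
    using fundamental_theorem_of_algebra[of "map_poly of_real (gcd P Q)"]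
    by (auto simp: constant_degree degree_map_poly)
  have "poly (map_poly of_real R) z = 0" if "gcd P Q dvd R" for R
    using that z by (auto simp: hom_distribs elim!: dvdE)
  then show False using assms by auto
qed

lemma map_poly_of_real_of_int_poly [simp]: "map_poly of_real (of_int_poly F) = of_int_poly F"
  by (simp add: map_poly_map_poly o_def)

lemma coprime_x_sq_kernel_poly:
  assumes m: "m > 0"
  shows "Rings.coprime (of_int_poly ([:0, 0, 1:] * kernel_poly) :: real poly) (monom 1 m - 1)"
proof (rule coprime_of_no_common_complex_root)
  fix z :: complex
  assume "poly (map_poly of_real (of_int_poly ([:0, 0, 1:] * kernel_poly))) z = 0"
  then have "z = 0 \<or> poly (of_int_poly kernel_poly) z = 0"
    by (simp add: hom_distribs of_int_hom.map_poly_pCons_hom)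
  then show "poly (map_poly of_real (monom 1 m - 1)) z \<noteq> 0"
    using kernel_poly_no_root_of_unity[of z m] m
    by (auto simp: hom_distribs map_poly_monom poly_monom power_0_left)
qed

lemma kernel_system_det:
  "[:0, 0, 1:] * [:1, 0, 0, 0, 0, 0, 0, 0, 1, 1:] * [:1, 1, 0, 0, 0, 0, 0, 0, 0, 1:]
     - [:1, 0, 1, 0, 1:] * ([:0, 0, 1:] * [:0, 0, 0, 0, 0, 1:] * [:1, 0, 1, 0, 1:])
   = of_int_poly ([:0, 0, 1:] * kernel_poly) * ([:-1, 1:] ^ 2 :: real poly)"
proof -
  have det: "Z * Q * Q' - P * (Z * W * P) = Z * R * D ^ 2"
    if "D * D * R = Q * Q' - W * P * P" for Z Q Q' P W D R :: "real poly"
  proof -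
    have "Z * Q * Q' - P * (Z * W * P) = Z * (Q * Q' - W * P * P)"
      by (simp add: algebra_simps)
    also have "\<dots> = Z * (D * D * R)" by (simp only: that)
    also have "\<dots> = Z * R * D ^ 2" by (simp add: power2_eq_square ac_simps)
    finally show ?thesis .
  qed
  have "[:-1, 1:] * [:-1, 1:] * (of_int_poly kernel_poly :: real poly)
      = [:1, 0, 0, 0, 0, 0, 0, 0, 1, 1:] * [:1, 1, 0, 0, 0, 0, 0, 0, 0, 1:]
        - [:0, 0, 0, 0, 0, 1:] * [:1, 0, 1, 0, 1:] * [:1, 0, 1, 0, 1:]"
    using arg_cong[OF kernel_poly_factorisation, of "of_int_poly :: int poly \<Rightarrow> real poly"]
    by (simp only: of_int_poly_hom.hom_mult of_int_poly_hom.hom_minus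
        of_int_hom.map_poly_pCons_hom of_int_0 of_int_1 of_int_minus map_poly_0)
  from det[where Z = "[:0, 0, 1:]", OF this] show ?thesis
    by (simp only: of_int_poly_hom.hom_mult of_int_hom.map_poly_pCons_hom
        of_int_0 of_int_1 map_poly_0)
qed

lemma kernel_sequences_const:
  fixes a b :: "int \<Rightarrow> real"
  assumes m: "m > 0" and per_a: "\<And>k. a (k + int m) = a k" and per_b: "\<And>k. b (k + int m) = b k"
    and eq_a: "\<And>k. a k + a (k + 2) + a (k - 2) + b k + b (k - 8) + b (k - 9) = T"
    and eq_b: "\<And>k. b k + b (k + 2) + b (k - 2) + a k + a (k + 8) + a (k + 9) = T"
  shows "a k = a 0" and "b k = b 0"
proof -
  define P Q Q' X2 X5 :: "real poly"
    where "P = [:1, 0, 1, 0, 1:]" and "Q = [:1, 0, 0, 0, 0, 0, 0, 0, 1, 1:]"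
      and "Q' = [:1, 1, 0, 0, 0, 0, 0, 0, 0, 1:]" and "X2 = [:0, 0, 1:]"
      and "X5 = [:0, 0, 0, 0, 0, 1:]"
  define M where "M = (of_int_poly ([:0, 0, 1:] * kernel_poly) :: real poly)"
  have sys_a: "shift_act P a k + shift_act (X2 * Q) b k = T" for k
    using eq_a[of "k - 2"]
    by (simp add: P_def Q_def X2_def shift_act_mult shift_act_add algebra_simps)
  have sys_b: "shift_act Q' a k + shift_act (X2 * X5 * P) b k = T" for k
    using eq_b[of "k - 9"]
    by (simp add: P_def Q'_def X2_def X5_def shift_act_mult shift_act_add algebra_simps)
  have det_b: "X2 * Q * Q' - P * (X2 * X5 * P) = M * [:-1, 1:] ^ 2"
    unfolding P_def Q_def Q'_def X2_def X5_def M_def by (rule kernel_system_det)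
  then have det_a: "P * (X2 * X5 * P) - X2 * Q * Q' = (- M) * [:-1, 1:] ^ 2"
    by (metis minus_diff_eq mult_minus_left)
  have cop: "Rings.coprime M (monom 1 m - 1)"
    unfolding M_def using m by (rule coprime_x_sq_kernel_poly)
  then show "a k = a 0"
    using periodic_shift_system_const[OF m per_a sys_a sys_b det_a] by simp
  have "shift_act (X2 * Q) b k + shift_act P a k = T"
    and "shift_act (X2 * X5 * P) b k + shift_act Q' a k = T" for k
    using sys_a[of k] sys_b[of k] by (simp_all add: add.commute)
  from periodic_shift_system_const[OF m per_b this det_b cop]
  show "b k = b 0" .
qed

section \<open>Dihedral groups\<close>

definition dih_elt :: "nat \<Rightarrow> int \<Rightarrow> bool \<Rightarrow> nat \<times> bool" where
  "dih_elt m k b = (nat (k mod int m), b)"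

lemma dih_elt_in_carrier: "m > 0 \<Longrightarrow> dih_elt m k b \<in> carrier (Dih m)"
  by (simp add: dih_elt_def Dih_def nat_less_iff)

lemma carrier_Dih_obtain_dih_elt:
  assumes "x \<in> carrier (Dih m)"
  obtains k b where "x = dih_elt m k b"
proof -
  obtain j b where "x = (j, b)" "j < m" using assms by (auto simp: Dih_def)
  then have "x = dih_elt m (int j) b" by (simp add: dih_elt_def nat_mod_as_int[symmetric])
  then show ?thesis by (rule that)
qed

lemma dih_elt_eq_iff:
  assumes "m > 0"
  shows "dih_elt m i s = dih_elt m j t \<longleftrightarrow> int m dvd i - j \<and> s = t"
  using assms by (simp add: dih_elt_def nat_eq_iff mod_eq_dvd_iff)

lemma dih_elt_add_period [simp]: "dih_elt m (k + int m) b = dih_elt m k b"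
  by (simp add: dih_elt_def)

lemma dih_elt_diff_period [simp]: "dih_elt m (k - int m) b = dih_elt m k b"
  by (metis diff_add_cancel dih_elt_add_period)

lemma dih_elt_neq_of_snd_neq: "b \<noteq> c \<Longrightarrow> dih_elt m k b \<noteq> dih_elt m l c"
  by (simp add: dih_elt_def)

lemma finite_carrier_Dih: "finite (carrier (Dih m))"
  by (simp add: Dih_def)

lemma card_carrier_Dih: "card (carrier (Dih m)) = 2 * m"
  by (simp add: Dih_def card_cartesian_product)

lemma sum_carrier_Dih: "(\<Sum>v\<in>carrier (Dih m). f v) = (\<Sum>j<m. f (j, False) + f (j, True))"
  by (simp add: Dih_def sum.cartesian_product' UNIV_bool add.commute)

lemma dih_mult_dih_elt:
  assumes m: "m > 0"
  shows "dih_mult m (dih_elt m i s) (dih_elt m j t) = dih_elt m (if s then i - j else i + j) (s \<noteq> t)"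
proof -
  define a b where "a = nat (i mod int m)" and "b = nat (j mod int m)"
  have "j mod int m < int m" using m by (intro pos_mod_bound) simp
  then have "b \<le> m" by (simp add: b_def nat_le_iff)
  moreover have "int a = i mod int m" "int b = j mod int m" using m by (simp_all add: a_def b_def)
  ultimately have ab: "int a = i mod int m" "int b = j mod int m" "b \<le> m" by simp_all
  have "int ((if s then a + (m - b) else a + b) mod m) = (if s then i - j else i + j) mod int m"
  proof (cases s)
    case True
    have "int (a + (m - b)) = i mod int m - j mod int m + int m" using ab by (simp add: of_nat_diff)
    then show ?thesis using True by (simp add: of_nat_mod mod_diff_eq)
  next
    case False
    then show ?thesis using ab by (simp add: of_nat_mod mod_add_eq)
  qed
  then have "(if s then a + (m - b) else a + b) mod m = nat ((if s then i - j else i + j) mod int m)"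
    by (metis nat_int)
  then show ?thesis unfolding a_def b_def by (simp add: dih_mult_def dih_elt_def)
qed

lemma Dih_mult_dih_elt:
  "m > 0 \<Longrightarrow>
    dih_elt m i s \<otimes>\<^bsub>Dih m\<^esub> dih_elt m j t = dih_elt m (if s then i - j else i + j) (s \<noteq> t)"
  by (simp add: Dih_def dih_mult_dih_elt)

lemma Dih_one_eq: "\<one>\<^bsub>Dih m\<^esub> = dih_elt m 0 False"
  by (simp add: Dih_def dih_elt_def)

lemma group_Dih:
  assumes m: "m > 0"
  shows "group (Dih m)"
proof (rule groupI)
  fix x y assume "x \<in> carrier (Dih m)" "y \<in> carrier (Dih m)"
  then show "x \<otimes>\<^bsub>Dih m\<^esub> y \<in> carrier (Dih m)"
    using m by (auto elim!: carrier_Dih_obtain_dih_elt simp: Dih_mult_dih_elt dih_elt_in_carrier)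
next
  show "\<one>\<^bsub>Dih m\<^esub> \<in> carrier (Dih m)" using m by (simp add: Dih_one_eq dih_elt_in_carrier)
next
  fix x y z assume "x \<in> carrier (Dih m)" "y \<in> carrier (Dih m)" "z \<in> carrier (Dih m)"
  then show
    "x \<otimes>\<^bsub>Dih m\<^esub> y \<otimes>\<^bsub>Dih m\<^esub> z = x \<otimes>\<^bsub>Dih m\<^esub> (y \<otimes>\<^bsub>Dih m\<^esub> z)"
    using m by (auto elim!: carrier_Dih_obtain_dih_elt simp: Dih_mult_dih_elt algebra_simps)
next
  fix x assume "x \<in> carrier (Dih m)"
  then show "\<one>\<^bsub>Dih m\<^esub> \<otimes>\<^bsub>Dih m\<^esub> x = x"
    using m by (auto elim!: carrier_Dih_obtain_dih_elt simp: Dih_one_eq Dih_mult_dih_elt)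
next
  fix x assume "x \<in> carrier (Dih m)"
  then obtain k b where x: "x = dih_elt m k b" by (rule carrier_Dih_obtain_dih_elt)
  show "\<exists>y \<in> carrier (Dih m). y \<otimes>\<^bsub>Dih m\<^esub> x = \<one>\<^bsub>Dih m\<^esub>"
    using m by (intro bexI[of _ "dih_elt m (if b then k else - k) b"])
      (simp_all add: x Dih_one_eq Dih_mult_dih_elt dih_elt_in_carrier)
qed

lemma inv_Dih_dih_elt:
  "m > 0 \<Longrightarrow> inv\<^bsub>Dih m\<^esub> dih_elt m k b = dih_elt m (if b then k else - k) b"
  by (rule group.inv_equality[OF group_Dih])
    (simp_all add: Dih_one_eq Dih_mult_dih_elt dih_elt_in_carrier)

lemma dih_r_pow: "m > 0 \<Longrightarrow> dih_r m [^]\<^bsub>Dih m\<^esub> (n :: nat) = dih_elt m (int n) False"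
proof (induction n)
  case 0
  then show ?case by (simp add: Dih_one_eq)
next
  case (Suc n)
  have "dih_r m = dih_elt m 1 False" by (simp add: dih_r_def dih_elt_def nat_mod_as_int)
  then show ?case using Suc by (simp add: Dih_mult_dih_elt add.commute)
qed

lemma dih_s_eq: "dih_s = dih_elt m 0 True"
  by (simp add: dih_s_def dih_elt_def)

section \<open>Complements of Cayley graphs\<close>

context group
begin

lemma cayley_neighbours_eq:
  assumes C: "C \<subseteq> carrier G" and v: "v \<in> carrier G"
  shows "{u \<in> carrier G. cay_adj G C v u} = (\<lambda>c. c \<otimes> v) ` C"
proof (intro equalityI subsetI)
  fix u assume "u \<in> {u \<in> carrier G. cay_adj G C v u}"
  then have "u \<otimes> inv v \<in> C" "u = (u \<otimes> inv v) \<otimes> v"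
    using v by (simp_all add: cay_adj_def m_assoc)
  then show "u \<in> (\<lambda>c. c \<otimes> v) ` C" by blast
next
  fix u assume "u \<in> (\<lambda>c. c \<otimes> v) ` C"
  then obtain c where "c \<in> C" "u = c \<otimes> v" by blast
  then show "u \<in> {u \<in> carrier G. cay_adj G C v u}"
    using C v by (auto simp: cay_adj_def m_assoc)
qed

lemma compl_cayley_neighbours_eq:
  assumes C: "is_cayley_connection_set G C" and v: "v \<in> carrier G"
  shows "{u \<in> carrier G. compl_adj (carrier G) (cay_adj G C) v u}
    = carrier G - insert v ((\<lambda>c. c \<otimes> v) ` C)"
    and "v \<notin> (\<lambda>c. c \<otimes> v) ` C" and "inj_on (\<lambda>c. c \<otimes> v) C"
proof -
  have C': "C \<subseteq> carrier G" "\<one> \<notin> C" using C by (auto simp: is_cayley_connection_set_def)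
  have "{u \<in> carrier G. compl_adj (carrier G) (cay_adj G C) v u}
      = carrier G - insert v {u \<in> carrier G. cay_adj G C v u}"
    using v by (auto simp: compl_adj_def)
  then show "{u \<in> carrier G. compl_adj (carrier G) (cay_adj G C) v u}
      = carrier G - insert v ((\<lambda>c. c \<otimes> v) ` C)"
    using cayley_neighbours_eq[OF C'(1) v] by simp
  show "inj_on (\<lambda>c. c \<otimes> v) C" using C'(1) v by (intro inj_onI) (auto dest: right_cancel)
  show "v \<notin> (\<lambda>c. c \<otimes> v) ` C"
  proof
    assume "v \<in> (\<lambda>c. c \<otimes> v) ` C"
    then obtain c where "c \<in> C" "\<one> \<otimes> v = c \<otimes> v" using v by auto
    then show False using C' v right_cancel[of v "\<one>" c] by auto
  qed
qed

lemma regular_compl_cayley: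
  assumes C: "is_cayley_connection_set G C" and fin: "finite (carrier G)"
  shows "regular_graph (carrier G) (compl_adj (carrier G) (cay_adj G C)) (card (carrier G) - 1 - card C)"
  unfolding regular_graph_def
proof
  fix v assume v: "v \<in> carrier G"
  have C': "C \<subseteq> carrier G" using C by (auto simp: is_cayley_connection_set_def)
  have "card (carrier G - insert v ((\<lambda>c. c \<otimes> v) ` C))
      = card (carrier G) - card (insert v ((\<lambda>c. c \<otimes> v) ` C))"
    using C' v fin by (intro card_Diff_subset) (auto intro: finite_subset)
  also have "\<dots> = card (carrier G) - 1 - card C"
    using compl_cayley_neighbours_eq(2,3)[OF C v] C' fin
    by (simp add: card_image finite_subset)
  finally show
    "card {u \<in> carrier G. compl_adj (carrier G) (cay_adj G C) v u} = card (carrier G) - 1 - card C"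
    using compl_cayley_neighbours_eq(1)[OF C v] by simp
qed

lemma adj_kernel_compl_cayley_iff:
  assumes C: "is_cayley_connection_set G C" and fin: "finite (carrier G)"
  shows "y \<in> adj_kernel (carrier G) (compl_adj (carrier G) (cay_adj G C))
    \<longleftrightarrow> (\<forall>v \<in> carrier G.
          y v + (\<Sum>c\<in>C. y (c \<otimes> v)) = (\<Sum>u\<in>carrier G. y u))"
proof -
  have C': "C \<subseteq> carrier G" using C by (auto simp: is_cayley_connection_set_def)
  have "(\<Sum>u\<in>{u \<in> carrier G. compl_adj (carrier G) (cay_adj G C) v u}. y u)
      = (\<Sum>u\<in>carrier G. y u) - (y v + (\<Sum>c\<in>C. y (c \<otimes> v)))" if v: "v \<in> carrier G" for v
  proof -
    have "(\<Sum>u\<in>carrier G - insert v ((\<lambda>c. c \<otimes> v) ` C). y u)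
        = (\<Sum>u\<in>carrier G. y u) - (\<Sum>u\<in>insert v ((\<lambda>c. c \<otimes> v) ` C). y u)"
      using C' v fin by (intro sum_diff) auto
    also have "(\<Sum>u\<in>insert v ((\<lambda>c. c \<otimes> v) ` C). y u)
        = y v + (\<Sum>c\<in>C. y (c \<otimes> v))"
      using compl_cayley_neighbours_eq(2,3)[OF C v] C' fin
      by (simp add: sum.reindex finite_subset)
    finally show ?thesis using compl_cayley_neighbours_eq(1)[OF C v] by simp
  qed
  then show ?thesis by (auto simp: adj_kernel_def)
qed

lemma compl_cayley_eq_cayley:
  assumes C: "is_cayley_connection_set G C"
  shows "is_cayley_connection_set G (carrier G - {\<one>} - C)"
    and "\<And>u v. u \<in> carrier G \<Longrightarrow> v \<in> carrier G \<Longrightarrow>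
      compl_adj (carrier G) (cay_adj G C) u v \<longleftrightarrow> cay_adj G (carrier G - {\<one>} - C) u v"
proof -
  have inv_C: "inv c \<in> C \<longleftrightarrow> c \<in> C" if "c \<in> carrier G" for c
    using C that by (metis inv_inv is_cayley_connection_set_def)
  show "is_cayley_connection_set G (carrier G - {\<one>} - C)"
    by (auto simp: is_cayley_connection_set_def inv_C)
  show "compl_adj (carrier G) (cay_adj G C) u v \<longleftrightarrow> cay_adj G (carrier G - {\<one>} - C) u v"
    if "u \<in> carrier G" "v \<in> carrier G" for u v
  proof -
    have "v \<otimes> inv u = \<one> \<longleftrightarrow> v = u" using that by (metis inv_closed r_inv right_cancel)
    then show ?thesis using that by (auto simp: compl_adj_def cay_adj_def)
  qed
qed

end

section \<open>The nut graph\<close>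

definition nut_connection_set :: "nat \<Rightarrow> (nat \<times> bool) set" where
  "nut_connection_set m = {dih_elt m 2 False, dih_elt m (-2) False,
     dih_elt m 0 True, dih_elt m 8 True, dih_elt m 9 True}"

lemma nut_connection_set_eq:
  assumes "m > 0"
  shows "{dih_r m [^]\<^bsub>Dih m\<^esub> (2::nat), inv\<^bsub>Dih m\<^esub> (dih_r m [^]\<^bsub>Dih m\<^esub> (2::nat)),
      dih_s, dih_r m [^]\<^bsub>Dih m\<^esub> (8::nat) \<otimes>\<^bsub>Dih m\<^esub> dih_s,
      dih_r m [^]\<^bsub>Dih m\<^esub> (9::nat) \<otimes>\<^bsub>Dih m\<^esub> dih_s}
    = nut_connection_set m"
  using assms
  by (simp add: nut_connection_set_def dih_r_pow inv_Dih_dih_elt dih_s_eq[of m] Dih_mult_dih_elt)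

abbreviation nut_compl_adj :: "nat \<Rightarrow> nat \<times> bool \<Rightarrow> nat \<times> bool \<Rightarrow> bool" where
  "nut_compl_adj m \<equiv> compl_adj (carrier (Dih m)) (cay_adj (Dih m) (nut_connection_set m))"

lemma nut_connection_set:
  assumes m: "m \<ge> 10"
  shows "is_cayley_connection_set (Dih m) (nut_connection_set m)"
    and "card (nut_connection_set m) = 5"
    and "(\<Sum>c\<in>nut_connection_set m. f (c \<otimes>\<^bsub>Dih m\<^esub> dih_elt m k b))
      = f (dih_elt m (k + 2) b) + f (dih_elt m (k - 2) b) + f (dih_elt m (- k) (\<not> b))
        + f (dih_elt m (8 - k) (\<not> b)) + f (dih_elt m (9 - k) (\<not> b))"
proof -
  have m0: "m > 0" using m by simp
  have small: "\<not> int m dvd c" if "0 < \<bar>c\<bar>" "\<bar>c\<bar> < 10" for c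
    using that m zdvd_imp_le[of "int m" "\<bar>c\<bar>"] by auto
  have distinct: "dih_elt m 2 False \<noteq> dih_elt m (-2) False" "dih_elt m 8 True \<noteq> dih_elt m 9 True"
    "dih_elt m 0 True \<noteq> dih_elt m 8 True" "dih_elt m 0 True \<noteq> dih_elt m 9 True"
    using small[of 4] small[of "-8"] small[of "-9"] small[of "-1"]
    by (simp_all add: dih_elt_eq_iff[OF m0])
  have "\<one>\<^bsub>Dih m\<^esub> \<notin> nut_connection_set m"
    using small[of "-2"] small[of 2]
    by (auto simp: nut_connection_set_def Dih_one_eq dih_elt_eq_iff[OF m0])
  moreover have "nut_connection_set m \<subseteq> carrier (Dih m)"
    using m0 by (simp add: nut_connection_set_def dih_elt_in_carrier)
  moreover have "inv\<^bsub>Dih m\<^esub> c \<in> nut_connection_set m" if "c \<in> nut_connection_set m" for c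
    using that m0 by (auto simp: nut_connection_set_def inv_Dih_dih_elt)
  ultimately show "is_cayley_connection_set (Dih m) (nut_connection_set m)"
    by (auto simp: is_cayley_connection_set_def)
  show "card (nut_connection_set m) = 5"
    using distinct by (simp add: nut_connection_set_def dih_elt_neq_of_snd_neq)
  show "(\<Sum>c\<in>nut_connection_set m. f (c \<otimes>\<^bsub>Dih m\<^esub> dih_elt m k b))
      = f (dih_elt m (k + 2) b) + f (dih_elt m (k - 2) b) + f (dih_elt m (- k) (\<not> b))
        + f (dih_elt m (8 - k) (\<not> b)) + f (dih_elt m (9 - k) (\<not> b))"
    using distinct m0
    by (simp add: nut_connection_set_def dih_elt_neq_of_snd_neq Dih_mult_dih_elt algebra_simps)
qed

lemma nut_kernel_iff:
  assumes m: "m \<ge> 10"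
  shows "y \<in> adj_kernel (carrier (Dih m)) (nut_compl_adj m)
    \<longleftrightarrow> (\<forall>k b. y (dih_elt m k b) + y (dih_elt m (k + 2) b) + y (dih_elt m (k - 2) b)
        + y (dih_elt m (- k) (\<not> b)) + y (dih_elt m (8 - k) (\<not> b)) + y (dih_elt m (9 - k) (\<not> b))
      = (\<Sum>u\<in>carrier (Dih m). y u))"
proof -
  have m0: "m > 0" using m by simp
  interpret group "Dih m" using m0 by (rule group_Dih)
  have "(\<forall>v\<in>carrier (Dih m).
        y v + (\<Sum>c\<in>nut_connection_set m. y (c \<otimes>\<^bsub>Dih m\<^esub> v)) = sum y (carrier (Dih m)))
    \<longleftrightarrow> (\<forall>k b. y (dih_elt m k b)
        + (\<Sum>c\<in>nut_connection_set m. y (c \<otimes>\<^bsub>Dih m\<^esub> dih_elt m k b)) = sum y (carrier (Dih m)))"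
    using m0 by (auto elim!: carrier_Dih_obtain_dih_elt intro: dih_elt_in_carrier)
  then show ?thesis
    unfolding adj_kernel_compl_cayley_iff[OF nut_connection_set(1)[OF m] finite_carrier_Dih]
    by (simp add: nut_connection_set(3)[OF m] add.assoc)
qed

lemma nut_kernel_vector:
  fixes y :: "nat \<times> bool \<Rightarrow> real"
  assumes m: "m \<ge> 10"
    and eq: "\<And>k b. y (dih_elt m k b) + y (dih_elt m (k + 2) b) + y (dih_elt m (k - 2) b)
        + y (dih_elt m (- k) (\<not> b)) + y (dih_elt m (8 - k) (\<not> b)) + y (dih_elt m (9 - k) (\<not> b))
      = (\<Sum>u\<in>carrier (Dih m). y u)"
    and v: "v \<in> carrier (Dih m)"
  shows "y v = y (0, False) * (if snd v then -1 else 1)"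
proof -
  have m0: "m > 0" using m by simp
  define T where "T = (\<Sum>u\<in>carrier (Dih m). y u)"
  define a where "a k = y (dih_elt m k False)" for k
  \<comment> \<open>reading the reflections backwards turns both kernel equations into recurrences\<close>
  define b where "b k = y (dih_elt m (- k) True)" for k
  have "a (k + int m) = a k" "b (k + int m) = b k" for k
    by (simp_all add: a_def b_def)
  moreover have "a k + a (k + 2) + a (k - 2) + b k + b (k - 8) + b (k - 9) = T" for k
    using eq[of k False] by (simp add: a_def b_def T_def algebra_simps)
  moreover have "b k + b (k + 2) + b (k - 2) + a k + a (k + 8) + a (k + 9) = T" for k
    using eq[of "- k" True] by (simp add: a_def b_def T_def algebra_simps)
  ultimately have a: "a k = a 0" and b: "b k = b 0" for k
    using kernel_sequences_const[OF m0] by blast+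
  have y: "y u = (if snd u then b 0 else a 0)" if u_in: "u \<in> carrier (Dih m)" for u
  proof -
    obtain k c where u: "u = dih_elt m k c" using u_in by (rule carrier_Dih_obtain_dih_elt)
    show ?thesis
      using a[of k] b[of "- k"] unfolding u a_def b_def by (cases c) (simp_all add: dih_elt_def)
  qed
  have "T = real m * (a 0 + b 0)"
    unfolding T_def sum_carrier_Dih using m0 by (simp add: y Dih_def)
  moreover have "a 0 + a 2 + a (- 2) + b 0 + b (- 8) + b (- 9) = T"
    using eq[of 0 False] by (simp add: a_def b_def T_def)
  ultimately have "(real m - 3) * (a 0 + b 0) = 0"
    using a[of 2] a[of "- 2"] b[of "- 8"] b[of "- 9"] by (simp add: algebra_simps)
  then have "b 0 = - a 0" using m by simp
  moreover have "a 0 = y (0, False)" by (simp add: a_def dih_elt_def)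
  ultimately show ?thesis using y[OF v] by simp
qed

lemma nut_graph_compl_nut_cayley:
  assumes m: "m \<ge> 10"
  shows "nut_graph (carrier (Dih m)) (nut_compl_adj m)"
proof -
  define x where "x v = (if snd v then -1 else 1 :: real)" for v :: "nat \<times> bool"
  have "(\<Sum>u\<in>carrier (Dih m). x u) = 0" by (simp add: sum_carrier_Dih x_def)
  then have "x \<in> adj_kernel (carrier (Dih m)) (nut_compl_adj m)"
    unfolding nut_kernel_iff[OF m] by (simp add: x_def dih_elt_def)
  moreover have "\<forall>v. x v \<noteq> 0" by (simp add: x_def)
  moreover have "\<exists>c. \<forall>v\<in>carrier (Dih m). y v = c * x v"
    if "y \<in> adj_kernel (carrier (Dih m)) (nut_compl_adj m)" for y
    using that nut_kernel_vector[OF m] unfolding nut_kernel_iff[OF m] x_def by blast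
  moreover have "finite (carrier (Dih m))" "2 \<le> card (carrier (Dih m))"
    using m by (simp_all add: finite_carrier_Dih card_carrier_Dih)
  ultimately show ?thesis unfolding nut_graph_def by blast
qed

theorem mainTheorem14:
  fixes d :: nat
  assumes "d \<ge> 14" and "d mod 4 = 2"
  defines "m \<equiv> (d + 6) div 2"
  defines "G \<equiv> Dih m"
  defines "r \<equiv> dih_r m"
  defines "s \<equiv> dih_s"
  defines "C \<equiv> {r [^]\<^bsub>G\<^esub> (2::nat), inv\<^bsub>G\<^esub> (r [^]\<^bsub>G\<^esub> (2::nat)), s,
                 r [^]\<^bsub>G\<^esub> (8::nat) \<otimes>\<^bsub>G\<^esub> s, r [^]\<^bsub>G\<^esub> (9::nat) \<otimes>\<^bsub>G\<^esub> s}"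
  defines "H \<equiv> compl_adj (carrier G) (cay_adj G C)"
  shows "card (carrier G) = d + 6
       \<and> regular_graph (carrier G) H d
       \<and> (\<exists>C'. is_cayley_connection_set G C' \<and>
              (\<forall>u\<in>carrier G. \<forall>v\<in>carrier G. H u v \<longleftrightarrow> cay_adj G C' u v))
       \<and> nut_graph (carrier G) H"
proof -
  have m: "m \<ge> 10" and d: "d + 6 = 2 * m"
    using assms(1,2) unfolding m_def by presburger+
  interpret group G unfolding G_def using m by (intro group_Dih) simp
  have C: "C = nut_connection_set m"
    unfolding C_def G_def r_def s_def using m by (intro nut_connection_set_eq) simp
  have conn: "is_cayley_connection_set G C"
    unfolding C G_def using m by (rule nut_connection_set(1))
  have card: "card (carrier G) = d + 6" using d by (simp add: G_def card_carrier_Dih)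
  moreover have "regular_graph (carrier G) H d"
    using regular_compl_cayley[OF conn] card nut_connection_set(2)[OF m]
    by (simp add: H_def C G_def finite_carrier_Dih)
  moreover have "\<exists>C'. is_cayley_connection_set G C' \<and>
      (\<forall>u\<in>carrier G. \<forall>v\<in>carrier G. H u v \<longleftrightarrow> cay_adj G C' u v)"
    using compl_cayley_eq_cayley[OF conn] unfolding H_def by blast
  moreover have "nut_graph (carrier G) H"
    unfolding H_def C G_def using m by (rule nut_graph_compl_nut_cayley)
  ultimately show ?thesis by blast
qed

end
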